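(* Let $G$ be a graph on vertex set $V=\{1,\ldots,n\}$ and $G_l$ a graph on $V$ with $E(G)\subseteq E(G_l)$. Suppose $A\in\mathcal{S}(G)$, $X\in\overline{\mathcal{S}_0}(G_l^c)$, and $AX-XA=0$. If there exists a vertex $i$ such that the induced subgraph $G_l^c[N_G(i)]$ has a connected component that is a cycle $C$ of odd length, and for each $j\in V(C)$ the pair $\{i,j\}$ is focused on $V(C)$ with respect to $G$ and $G_l$, then $X\in\overline{\mathcal{S}_0}(G_{l+1}^c)$, where $G_{l+1}=G_l+E(C)$.
   Context: All graphs are finite, simple, undirected. For a graph $G$ on $\{1,\ldots,n\}$, $\mathcal{S}(G)$ is the set of real symmetric $n\times n$ matrices $A=(a_{ij})$ with $a_{ij}\neq0$ iff $\{i,j\}\in E(G)$ for $i\neq j$ (diagonal arbitrary). For a graph $H$ on $\{1,\ldots,n\}$, $\overline{\mathcal{S}_0}(H)$ is the set of real symmetric matrices whose $(i,j)$ entry is zero whenever $i=j$ or $\{i,j\}\notin E(H)$; $H^c$ is the complement of $H$. $N_G(i)$ is the (open) set of neighbours of $i$ in $G$, $N_G[i]$ the closed neighbourhood, and $N_G[i]^c$ its complement in $V$; $H[W]$ is the subgraph of $H$ induced on $W$. For nonempty $U\subseteq V$, a pair $\{i,j\}$ is focused on $U$ with respect to $G$ and $G_l$ if $N_G[i]\cap N_{G_l}[j]^c\subseteq U$ and $N_G[j]\cap N_{G_l}[i]^c\subseteq U$. *)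

theory Defs
  imports "HOL-Analysis.Analysis"
begin

text \<open>Graphs on the finite vertex type 'n (vertex set V = UNIV), given by their
  edge sets: an edge is a 2-element set of vertices.\<close>

definition simple_graph :: "'n set set \<Rightarrow> bool" where
  "simple_graph E \<longleftrightarrow> (\<forall>e\<in>E. card e = 2)"

definition graph_compl :: "'n set set \<Rightarrow> 'n set set" where
  "graph_compl E = {{i, j} | i j. i \<noteq> j \<and> {i, j} \<notin> E}"

definition nbhd :: "'n set set \<Rightarrow> 'n \<Rightarrow> 'n set" where
  "nbhd E i = {j. {i, j} \<in> E}"

definition closed_nbhd :: "'n set set \<Rightarrow> 'n \<Rightarrow> 'n set" where
  "closed_nbhd E i = insert i (nbhd E i)"

definition induced_edges :: "'n set set \<Rightarrow> 'n set \<Rightarrow> 'n set set" where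
  "induced_edges E W = {e \<in> E. e \<subseteq> W}"

definition S_pattern :: "'n set set \<Rightarrow> (real^'n^'n) set" where
  "S_pattern E = {A. transpose A = A \<and>
     (\<forall>i j. i \<noteq> j \<longrightarrow> (A $ i $ j \<noteq> 0 \<longleftrightarrow> {i, j} \<in> E))}"

definition S0_bar :: "'n set set \<Rightarrow> (real^'n^'n) set" where
  "S0_bar E = {X. transpose X = X \<and>
     (\<forall>i j. (i = j \<or> {i, j} \<notin> E) \<longrightarrow> X $ i $ j = 0)}"

definition is_cycle :: "nat \<Rightarrow> 'n set \<Rightarrow> 'n set set \<Rightarrow> bool" where
  "is_cycle k VC EC \<longleftrightarrow> (\<exists>vs. distinct vs \<and> length vs = k \<and> k \<ge> 3 \<and> set vs = VC \<and>
     EC = {{vs ! t, vs ! ((t + 1) mod k)} | t. t < k})"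

text \<open>Since a cycle is connected, being a connected component amounts to:
  VC \<subseteq> W, EC is the induced edge set on VC, and no edge of E joins VC to W - VC.\<close>
definition odd_cycle_component :: "'n set set \<Rightarrow> 'n set \<Rightarrow> 'n set \<Rightarrow> 'n set set \<Rightarrow> bool" where
  "odd_cycle_component E W VC EC \<longleftrightarrow>
     VC \<subseteq> W \<and> EC = induced_edges E VC \<and>
     (\<forall>u\<in>VC. \<forall>w\<in>W - VC. {u, w} \<notin> E) \<and>
     (\<exists>k. odd k \<and> is_cycle k VC EC)"

definition focused :: "'n set set \<Rightarrow> 'n set set \<Rightarrow> 'n set \<Rightarrow> 'n \<Rightarrow> 'n \<Rightarrow> bool" where
  "focused G Gl U i j \<longleftrightarrow>
     closed_nbhd G i \<inter> - closed_nbhd Gl j \<subseteq> U \<and>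
     closed_nbhd G j \<inter> - closed_nbhd Gl i \<subseteq> U"

end

theory Submission
  imports Defs
begin

text \<open>Fix a vertex j of the odd cycle C. Since A and X are symmetric, (XA)ij = (AX)ji, and
  focusedness confines the nonzero terms of (AX)ij and (AX)ji to V(C). The terms of (AX)ji
  vanish, since V(C) lies in the G_l-neighbourhood of i, and those of (AX)ij live on the two
  cycle neighbours j-, j+ of j. So AX = XA at (i, j) reads a(j-) X(j-, j) + a(j+) X(j, j+) = 0
  with a(v) = A(i, v) nonzero. Multiplying by a(j), the products a(u) a(v) X(u, v) over
  consecutive cycle edges alternate in sign; around an odd cycle they must vanish, hence so
  does X on E(C).\<close>

lemma transpose_eq_entry_sym: "transpose X = X \<Longrightarrow> X $ a $ b = X $ b $ a"
  by (metis transpose_def vec_lambda_beta)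

lemma graph_compl_doubleton_iff: "{a, b} \<in> graph_compl E \<longleftrightarrow> a \<noteq> b \<and> {a, b} \<notin> E"
proof
  assume "{a, b} \<in> graph_compl E"
  then obtain c d where "{a, b} = {c, d}" "c \<noteq> d" "{c, d} \<notin> E"
    unfolding graph_compl_def by blast
  then show "a \<noteq> b \<and> {a, b} \<notin> E" by (metis doubleton_eq_iff)
qed (auto simp: graph_compl_def)

lemma S0_bar_compl_nonzero:
  assumes "X \<in> S0_bar (graph_compl E)" and "X $ a $ b \<noteq> 0"
  shows "a \<noteq> b \<and> {a, b} \<notin> E"
  using assms unfolding S0_bar_def graph_compl_doubleton_iff by blast

lemma S0_bar_compl_Un:
  assumes "X \<in> S0_bar (graph_compl E)" and "\<And>u v. {u, v} \<in> F \<Longrightarrow> X $ u $ v = 0"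
  shows "X \<in> S0_bar (graph_compl (E \<union> F))"
  using assms unfolding S0_bar_def graph_compl_doubleton_iff by blast

lemma S_pattern_nonzero_iff:
  "A \<in> S_pattern G \<Longrightarrow> a \<noteq> b \<Longrightarrow> A $ a $ b \<noteq> 0 \<longleftrightarrow> {a, b} \<in> G"
  unfolding S_pattern_def by blast

lemma S_pattern_nbhd_nonzero:
  assumes "simple_graph G" and "A \<in> S_pattern G" and "v \<in> nbhd G i"
  shows "A $ i $ v \<noteq> 0"
proof -
  have "{i, v} \<in> G" using assms(3) unfolding nbhd_def by simp
  moreover from this have "i \<noteq> v" using assms(1) unfolding simple_graph_def by force
  ultimately show ?thesis using S_pattern_nonzero_iff[OF assms(2)] by blast
qed

lemma matrix_mult_entry_support:
  fixes A B :: "'a::semiring_1^'n::finite^'n"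
  assumes "\<And>k. k \<notin> S \<Longrightarrow> A $ a $ k * B $ k $ b = 0"
  shows "(A ** B) $ a $ b = (\<Sum>k\<in>S. A $ a $ k * B $ k $ b)"
proof -
  have "(A ** B) $ a $ b = (\<Sum>k\<in>UNIV. A $ a $ k * B $ k $ b)"
    by (simp add: matrix_matrix_mult_def)
  also have "\<dots> = (\<Sum>k\<in>S. A $ a $ k * B $ k $ b)"
    using assms by (intro sum.mono_neutral_right) auto
  finally show ?thesis .
qed

lemma S_pattern_S0_bar_mult_support:
  assumes "A \<in> S_pattern G" and "X \<in> S0_bar (graph_compl Gl)"
    and "A $ a $ k * X $ k $ b \<noteq> 0"
  shows "k \<in> closed_nbhd G a - closed_nbhd Gl b"
proof -
  have "k = a \<or> {a, k} \<in> G"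
    using assms(3) S_pattern_nonzero_iff[OF assms(1), of a k] by auto
  moreover have "k \<noteq> b \<and> {b, k} \<notin> Gl"
    using assms(3) S0_bar_compl_nonzero[OF assms(2), of k b] by (auto simp: insert_commute)
  ultimately show ?thesis unfolding closed_nbhd_def nbhd_def by auto
qed

lemma focused_commutator_row_sum:
  fixes A X :: "real^'n::finite^'n"
  assumes A: "A \<in> S_pattern G" and X: "X \<in> S0_bar (graph_compl Gl)" and "G \<subseteq> Gl"
    and comm: "A ** X = X ** A" and U: "U \<subseteq> nbhd G i" and foc: "focused G Gl U i j"
  shows "(\<Sum>k\<in>U. A $ i $ k * X $ k $ j) = 0"
proof -
  have foc_ij: "closed_nbhd G i - closed_nbhd Gl j \<subseteq> U"
    and foc_ji: "closed_nbhd G j - closed_nbhd Gl i \<subseteq> U"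
    using foc unfolding focused_def by auto
  have U_Gl: "U \<subseteq> closed_nbhd Gl i"
    using U \<open>G \<subseteq> Gl\<close> unfolding nbhd_def closed_nbhd_def by auto
  have "X ** A = transpose (A ** X)"
    using A X unfolding S_pattern_def S0_bar_def by (simp add: matrix_transpose_mul)
  then have "(X ** A) $ i $ j = (A ** X) $ j $ i"
    by (simp add: transpose_def)
  also have "\<dots> = (\<Sum>k\<in>{}. A $ j $ k * X $ k $ i)"
  proof (rule matrix_mult_entry_support)
    show "A $ j $ k * X $ k $ i = 0" for k
      using S_pattern_S0_bar_mult_support[OF A X, of j k i] foc_ji U_Gl by blast
  qed
  finally have "(X ** A) $ i $ j = 0" by simp
  moreover have "(A ** X) $ i $ j = (\<Sum>k\<in>U. A $ i $ k * X $ k $ j)"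
  proof (rule matrix_mult_entry_support)
    show "A $ i $ k * X $ k $ j = 0" if "k \<notin> U" for k
      using S_pattern_S0_bar_mult_support[OF A X, of i k j] foc_ij that by blast
  qed
  ultimately show ?thesis using comm by simp
qed

lemma alternating_on_odd_cycle_zero:
  fixes z :: "nat \<Rightarrow> 'a::{idom, ring_char_0}"
  assumes "odd n" and alt: "\<And>t. t < n \<Longrightarrow> z ((t + 1) mod n) = - z t" and "t < n"
  shows "z t = 0"
proof -
  have n: "n > 0" using \<open>odd n\<close> by (rule odd_pos)
  have pow: "z (m mod n) = (-1) ^ m * z 0" for m
  proof (induction m)
    case (Suc m)
    have "z (Suc m mod n) = z ((m mod n + 1) mod n)" by (simp add: mod_Suc_eq)
    also have "\<dots> = - z (m mod n)" using alt n by simp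
    finally show ?case using Suc by simp
  qed simp
  have z0_neg: "z 0 = - z 0" using pow[of n] \<open>odd n\<close> by simp
  have "2 * z 0 = z 0 + z 0" by (rule mult_2)
  also have "\<dots> = 0" using z0_neg by (metis add.right_inverse)
  finally have "z 0 = 0" by simp
  then show ?thesis using pow[of t] \<open>t < n\<close> by simp
qed

lemma odd_cycle_weighted_zero:
  fixes a x :: "nat \<Rightarrow> 'a::{idom, ring_char_0}"
  assumes "odd n" and a: "\<And>t. t < n \<Longrightarrow> a t \<noteq> 0"
    and rel: "\<And>t. t < n \<Longrightarrow> a t * x t + a ((t + 2) mod n) * x ((t + 1) mod n) = 0"
    and "t < n"
  shows "x t = 0"
proof -
  define z where "z t = a t * a ((t + 1) mod n) * x t" for t
  have "z ((t + 1) mod n) = - z t" if "t < n" for t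
  proof -
    have "((t + 1) mod n + 1) mod n = (t + 2) mod n" by (simp add: mod_Suc_eq)
    then have "z t + z ((t + 1) mod n)
        = a ((t + 1) mod n) * (a t * x t + a ((t + 2) mod n) * x ((t + 1) mod n))"
      unfolding z_def by (simp add: algebra_simps)
    also have "\<dots> = 0" using rel[OF that] by simp
    finally show ?thesis by (simp add: eq_neg_iff_add_eq_0 add.commute)
  qed
  then have "z t = 0" using alternating_on_odd_cycle_zero \<open>odd n\<close> \<open>t < n\<close> by blast
  moreover have "n > 0" using \<open>odd n\<close> by (rule odd_pos)
  ultimately show ?thesis using a \<open>t < n\<close> unfolding z_def by simp
qed

lemma cycle_edge_at_successor:
  assumes "distinct vs" and "length vs = n" and "t < n"
    and "{u, vs ! ((t + 1) mod n)} \<in> {{vs ! s, vs ! ((s + 1) mod n)} | s. s < n}"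
  shows "u = vs ! t \<or> u = vs ! ((t + 2) mod n)"
proof -
  obtain s where s: "s < n" "{u, vs ! ((t + 1) mod n)} = {vs ! s, vs ! ((s + 1) mod n)}"
    using assms(4) by blast
  have n: "n > 0" using \<open>t < n\<close> by simp
  have idx: "vs ! p = vs ! q \<longleftrightarrow> p = q" if "p < n" "q < n" for p q
    using assms(1,2) that by (simp add: nth_eq_iff_index_eq)
  consider "vs ! ((t + 1) mod n) = vs ! s" "u = vs ! ((s + 1) mod n)"
    | "vs ! ((t + 1) mod n) = vs ! ((s + 1) mod n)" "u = vs ! s"
    using s(2) by (auto simp: doubleton_eq_iff)
  then show ?thesis
  proof cases
    case 1
    then have "s = (t + 1) mod n" using idx n s(1) by simp
    then show ?thesis using 1 by (simp add: mod_Suc_eq)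
  next
    case 2
    then have "(t + 1) mod n = (s + 1) mod n" using idx n by simp
    then have "s = t" using s(1) \<open>t < n\<close> by (auto simp: mod_Suc split: if_splits)
    then show ?thesis using 2 by simp
  qed
qed

lemma sum_over_cycle_neighbours:
  fixes X :: "real^'n::finite^'n"
  assumes X: "X \<in> S0_bar (graph_compl Gl)" and EC: "EC = induced_edges (graph_compl Gl) VC"
    and vs: "distinct vs" "length vs = n" "set vs = VC" and "n \<ge> 3"
    and EC_cycle: "EC = {{vs ! s, vs ! ((s + 1) mod n)} | s. s < n}" and "t < n"
  defines "j \<equiv> vs ! ((t + 1) mod n)"
  shows "(\<Sum>k\<in>VC. f k * X $ k $ j)
    = f (vs ! t) * X $ (vs ! t) $ j + f (vs ! ((t + 2) mod n)) * X $ (vs ! ((t + 2) mod n)) $ j"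
proof -
  have idx: "(t + 1) mod n < n" "(t + 2) mod n < n" using \<open>t < n\<close> by simp_all
  then have j: "j \<in> VC" using vs(2,3) unfolding j_def by (metis nth_mem)
  have "k \<in> {vs ! t, vs ! ((t + 2) mod n)}" if "k \<in> VC" "X $ k $ j \<noteq> 0" for k
  proof -
    have "{k, j} \<in> EC"
      using S0_bar_compl_nonzero[OF X that(2)] that(1) j
      unfolding EC induced_edges_def by (simp add: graph_compl_doubleton_iff)
    then show ?thesis
      using cycle_edge_at_successor[OF vs(1,2) \<open>t < n\<close>] EC_cycle unfolding j_def by simp
  qed
  moreover have "{vs ! t, vs ! ((t + 2) mod n)} \<subseteq> VC"
    using vs(2,3) idx(2) \<open>t < n\<close> by (metis nth_mem empty_subsetI insert_subset)
  ultimately have "(\<Sum>k\<in>VC. f k * X $ k $ j) = (\<Sum>k\<in>{vs ! t, vs ! ((t + 2) mod n)}. f k * X $ k $ j)"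
    using vs(3) by (intro sum.mono_neutral_right) auto
  moreover have "vs ! t \<noteq> vs ! ((t + 2) mod n)"
    using vs \<open>t < n\<close> \<open>n \<ge> 3\<close> by (cases "t + 2 < n") (auto simp: nth_eq_iff_index_eq mod_if)
  ultimately show ?thesis by simp
qed

lemma odd_cycle_componentE:
  assumes "odd_cycle_component (induced_edges E W) W VC EC"
  obtains n vs where "VC \<subseteq> W" "EC = induced_edges E VC" "odd n" "n \<ge> 3"
    "distinct vs" "length vs = n" "set vs = VC" "EC = {{vs ! t, vs ! ((t + 1) mod n)} | t. t < n}"
proof -
  have VC: "VC \<subseteq> W" and EC: "EC = induced_edges (induced_edges E W) VC"
    and cyc: "\<exists>n. odd n \<and> is_cycle n VC EC"
    using assms unfolding odd_cycle_component_def by blast+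
  have "induced_edges (induced_edges E W) VC = induced_edges E VC"
    using VC unfolding induced_edges_def by blast
  moreover obtain n vs where "odd n" "distinct vs" "length vs = n" "n \<ge> 3" "set vs = VC"
     "EC = {{vs ! t, vs ! ((t + 1) mod n)} | t. t < n}"
    using cyc unfolding is_cycle_def by blast
  ultimately show ?thesis using that VC EC by simp
qed

lemma commutator_relation_along_cycle:
  fixes A X :: "real^'n::finite^'n"
  assumes A: "A \<in> S_pattern G" and X: "X \<in> S0_bar (graph_compl Gl)" and "G \<subseteq> Gl"
    and comm: "A ** X = X ** A" and VC: "VC \<subseteq> nbhd G i" and foc: "\<forall>j\<in>VC. focused G Gl VC i j"
    and EC: "EC = induced_edges (graph_compl Gl) VC"
    and vs: "distinct vs" "length vs = n" "set vs = VC" and "n \<ge> 3"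
    and EC_cycle: "EC = {{vs ! s, vs ! ((s + 1) mod n)} | s. s < n}" and "t < n"
  shows "A $ i $ (vs ! t) * X $ (vs ! t) $ (vs ! ((t + 1) mod n))
    + A $ i $ (vs ! ((t + 2) mod n)) * X $ (vs ! ((t + 1) mod n)) $ (vs ! ((t + 2) mod n)) = 0"
proof -
  have "X $ (vs ! ((t + 1) mod n)) $ (vs ! ((t + 2) mod n))
      = X $ (vs ! ((t + 2) mod n)) $ (vs ! ((t + 1) mod n))"
    using X unfolding S0_bar_def by (simp add: transpose_eq_entry_sym)
  moreover have "vs ! ((t + 1) mod n) \<in> VC"
    using vs(2,3) \<open>t < n\<close> by (metis nth_mem mod_less_divisor gr_zeroI not_less_zero)
  then have "(\<Sum>k\<in>VC. A $ i $ k * X $ k $ (vs ! ((t + 1) mod n))) = 0"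
    using foc by (intro focused_commutator_row_sum[OF A X \<open>G \<subseteq> Gl\<close> comm VC]) blast
  ultimately show ?thesis
    unfolding sum_over_cycle_neighbours[OF X EC vs \<open>n \<ge> 3\<close> EC_cycle \<open>t < n\<close>] by simp
qed

theorem lemma3p8:
  fixes G Gl :: "'n::finite set set"
    and A X :: "real^'n^'n"
    and i :: 'n and VC :: "'n set" and EC :: "'n set set"
  assumes "simple_graph G" and "simple_graph Gl" and "G \<subseteq> Gl"
    and "A \<in> S_pattern G" and "X \<in> S0_bar (graph_compl Gl)"
    and "A ** X - X ** A = 0"
    and "odd_cycle_component (induced_edges (graph_compl Gl) (nbhd G i)) (nbhd G i) VC EC"
    and "\<forall>j\<in>VC. focused G Gl VC i j"
  shows "X \<in> S0_bar (graph_compl (Gl \<union> EC))"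
proof -
  obtain n vs where VC: "VC \<subseteq> nbhd G i" and EC: "EC = induced_edges (graph_compl Gl) VC"
    and "odd n" "n \<ge> 3" and vs: "distinct vs" "length vs = n" "set vs = VC"
    and EC_cycle: "EC = {{vs ! t, vs ! ((t + 1) mod n)} | t. t < n}"
    using assms(7) by (rule odd_cycle_componentE)
  have comm: "A ** X = X ** A" using assms(6) by simp
  define a where "a t = A $ i $ (vs ! t)" for t
  define x where "x t = X $ (vs ! t) $ (vs ! ((t + 1) mod n))" for t
  have "((t + 1) mod n + 1) mod n = (t + 2) mod n" for t by (simp add: mod_Suc_eq)
  then have "a t * x t + a ((t + 2) mod n) * x ((t + 1) mod n) = 0" if "t < n" for t
    using commutator_relation_along_cycle[OF assms(4,5,3) comm VC assms(8) EC vs \<open>n \<ge> 3\<close> EC_cycle that]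
    unfolding a_def x_def by simp
  moreover have "a t \<noteq> 0" if "t < n" for t
    using S_pattern_nbhd_nonzero[OF assms(1,4)] VC vs(2,3) that unfolding a_def
    by (metis nth_mem subsetD)
  ultimately have x0: "x t = 0" if "t < n" for t
    using odd_cycle_weighted_zero \<open>odd n\<close> that by blast
  show ?thesis
  proof (rule S0_bar_compl_Un[OF assms(5)])
    fix u v assume "{u, v} \<in> EC"
    then obtain t where "t < n" "{u, v} = {vs ! t, vs ! ((t + 1) mod n)}"
      using EC_cycle by blast
    moreover have "X $ u $ v = X $ v $ u"
      using assms(5) unfolding S0_bar_def by (simp add: transpose_eq_entry_sym)
    ultimately show "X $ u $ v = 0"
      using x0 unfolding x_def by (auto simp: doubleton_eq_iff)
  qed
qed

end
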